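(* For every $m\ge2$, $\mathbf{E}_m=\bigvee_{r\ge1}\mathbf{M}(\mathbf{w}_{m,r})$, where $\mathbf{w}_{m,r}=x^{m-1}t_1x^{m-1}t_2x^{m-1}\cdots t_rx^{m-1}$.
   Context: All varieties are varieties of monoids (signature: associative binary operation and identity constant $1$); identities are pairs of words over a countably infinite set of variables, and variables may be substituted by $1$. $\mathbf{O}$ is the variety defined by $xyt_1xt_2y \approx yxt_1xt_2y$, $xt_1xyt_2y \approx xt_1yxt_2y$, $xt_1yt_2xy \approx xt_1yt_2yx$. For $m\ge1$, $\mathbf{E}_m$ is the subvariety of $\mathbf{O}$ defined additionally by $x^{m+1}\approx x^m$ and $x^mt\approx tx^m$. For a word $\mathbf{w}$, the factor monoid $M(\mathbf{w})$ consists of all factors (contiguous subwords, including the empty word $1$) of $\mathbf{w}$ together with a zero $0$, with product $\mathbf{u}\cdot\mathbf{v}=\mathbf{u}\mathbf{v}$ if $\mathbf{u}\mathbf{v}$ is a factor of $\mathbf{w}$ and $0$ otherwise; $\mathbf{M}(\mathbf{w})$ is the monoid variety generated by $M(\mathbf{w})$. The join $\bigvee$ is taken in the lattice of monoid varieties (the variety generated by the union). Here $x,t_1,\dots,t_r$ are distinct variables. *)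

theory Defs
  imports "HOL-Algebra.Group" "HOL-Library.Sublist"
begin

type_synonym word = "nat list"
type_synonym identity = "word \<times> word"

text \<open>Value of a word under an assignment of variables to monoid elements.
  Assigning the identity element realises substitution of variables by 1.\<close>

primrec word_eval :: "('a, 'b) monoid_scheme \<Rightarrow> (nat \<Rightarrow> 'a) \<Rightarrow> word \<Rightarrow> 'a" where
  "word_eval G \<phi> [] = \<one>\<^bsub>G\<^esub>"
| "word_eval G \<phi> (a # w) = \<phi> a \<otimes>\<^bsub>G\<^esub> word_eval G \<phi> w"

definition satisfies :: "('a, 'b) monoid_scheme \<Rightarrow> identity \<Rightarrow> bool" where
  "satisfies G idt \<longleftrightarrow>
     (\<forall>\<phi>. (\<forall>n. \<phi> n \<in> carrier G) \<longrightarrow> word_eval G \<phi> (fst idt) = word_eval G \<phi> (snd idt))"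

text \<open>Variables: x = 0, y = 1, t1 = 2, t2 = 3, t = 2.\<close>

definition O_ids :: "identity set" where
  "O_ids = { ([0,1,2,0,3,1], [1,0,2,0,3,1]),
             ([0,2,0,1,3,1], [0,2,1,0,3,1]),
             ([0,2,1,3,0,1], [0,2,1,3,1,0]) }"

definition E_ids :: "nat \<Rightarrow> identity set" where
  "E_ids m = O_ids \<union> { (replicate (m+1) 0, replicate m 0),
                         (replicate m 0 @ [2], [2] @ replicate m 0) }"

definition in_E :: "nat \<Rightarrow> ('a, 'b) monoid_scheme \<Rightarrow> bool" where
  "in_E m G \<longleftrightarrow> monoid G \<and> (\<forall>idt \<in> E_ids m. satisfies G idt)"

text \<open>Factor monoid M(w): factors of w as Some u, zero as None.\<close>
definition factor_monoid :: "'x list \<Rightarrow> 'x list option monoid" where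
  "factor_monoid w =
     \<lparr> carrier = insert None (Some ` {u. sublist u w}),
       mult = (\<lambda>p q. case (p, q) of
                  (Some u, Some v) \<Rightarrow> (if sublist (u @ v) w then Some (u @ v) else None)
                | _ \<Rightarrow> None),
       one = Some [] \<rparr>"

text \<open>w_{m,r} = x^(m-1) t1 x^(m-1) ... tr x^(m-1), with x = 0 and t_i = i.\<close>
definition w_mr :: "nat \<Rightarrow> nat \<Rightarrow> nat list" where
  "w_mr m r = replicate (m-1) 0 @ concat (map (\<lambda>i. i # replicate (m-1) 0) [1..<r+1])"

text \<open>Membership in the join of the varieties generated by a family of monoids:
  the join is the variety generated by the union, i.e. (Birkhoff) the class of all
  monoids satisfying every identity that holds in all members of the family.\<close>
definition in_join_M :: "nat \<Rightarrow> ('a, 'b) monoid_scheme \<Rightarrow> bool" where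
  "in_join_M m G \<longleftrightarrow> monoid G \<and>
     (\<forall>idt. (\<forall>r\<ge>1. satisfies (factor_monoid (w_mr m r)) idt) \<longrightarrow> satisfies G idt)"

end

theory Submission
  imports Defs "HOL-Library.Multiset"
begin

text \<open>
  Every \<open>M(w\<^sub>m\<^sub>,\<^sub>r)\<close> lies in \<open>E\<^sub>m\<close>: if a substitution instance of an identity
  of \<open>E\<^sub>m\<close> is not trivially an equality, then each of its sides contains some letter
  \<open>t\<^sub>i\<close> twice or a power \<open>x\<^sup>m\<close>, and neither is a factor of \<open>w\<^sub>m\<^sub>,\<^sub>r\<close>, so both sides
  evaluate to \<open>0\<close>.

  Conversely, in \<open>E\<^sub>m\<close> the power \<open>x\<^sup>m\<close> is central and absorbs \<open>x\<close>, and two adjacent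
  letters that both occur elsewhere in a word commute. Hence every word \<open>u\<close> equals in
  \<open>E\<^sub>m\<close> its normal form: \<open>x\<^sup>m\<close> for every letter \<open>x\<close> that occurs \<open>m\<close> times inside one
  block between consecutive linear letters of \<open>u\<close>, followed by \<open>u\<close> with these letters
  deleted and each block sorted. The normal form is determined by the identities of the
  monoids \<open>M(w\<^sub>m\<^sub>,\<^sub>r)\<close>: sending the linear letters of \<open>u\<close> to \<open>t\<^sub>1, t\<^sub>2, \<dots>\<close> (padded by
  powers of \<open>x\<close>), one further letter to \<open>x\<close> and all others to \<open>1\<close> turns \<open>u\<close> into a factor
  of \<open>w\<^sub>m\<^sub>,\<^sub>r\<close> from which the linear letters of \<open>u\<close> and the number of occurrences of that
  letter in each block can be read off.
\<close>

lemma word_eval_factor_monoid: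
  "word_eval (factor_monoid w) \<phi> u =
    (if (\<forall>a\<in>set u. \<phi> a \<noteq> None) \<and> sublist (concat (map (\<lambda>a. the (\<phi> a)) u)) w
     then Some (concat (map (\<lambda>a. the (\<phi> a)) u)) else None)"
proof (induction u)
  case Nil
  then show ?case by (simp add: factor_monoid_def)
next
  case (Cons a u)
  show ?case
  proof (cases "\<phi> a")
    case None
    then show ?thesis by (simp add: factor_monoid_def)
  next
    case (Some p)
    have "sublist (p @ q) w \<Longrightarrow> sublist q w" for q
      by (meson sublist_append_leftI sublist_order.dual_order.trans)
    moreover have "word_eval (factor_monoid w) \<phi> (a # u) =
       (case word_eval (factor_monoid w) \<phi> u of None \<Rightarrow> None
        | Some q \<Rightarrow> if sublist (p @ q) w then Some (p @ q) else None)"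
      using Some by (simp add: factor_monoid_def split: option.splits)
    ultimately show ?thesis unfolding Cons.IH using Some by auto
  qed
qed

lemma satisfies_factor_monoidI:
  fixes w :: "'x list"
  assumes "set l = set r"
    and "\<And>\<theta>. concat (map \<theta> l) \<noteq> concat (map \<theta> r) \<Longrightarrow>
          \<not> sublist (concat (map \<theta> l)) w \<and> \<not> sublist (concat (map \<theta> r)) w"
  shows "satisfies (factor_monoid w) (l, r)"
  unfolding satisfies_def
proof (intro allI impI)
  fix \<phi> :: "nat \<Rightarrow> 'x list option"
  show "word_eval (factor_monoid w) \<phi> (fst (l, r)) = word_eval (factor_monoid w) \<phi> (snd (l, r))"
    using assms(1) assms(2)[of "\<lambda>a. the (\<phi> a)"]
    by (cases "concat (map (\<lambda>a. the (\<phi> a)) l) = concat (map (\<lambda>a. the (\<phi> a)) r)")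
      (simp_all add: word_eval_factor_monoid)
qed

lemma sublist_concat_map: "y \<in> set w \<Longrightarrow> sublist (f y) (concat (map f w))"
  by (auto dest: split_list)

lemma satisfies_factor_monoid_subst_eq:
  assumes "satisfies (factor_monoid w) (u, v)" "set u = set v"
    and "sublist (concat (map \<theta> u)) w"
  shows "concat (map \<theta> v) = concat (map \<theta> u)"
proof -
  define \<phi> where "\<phi> n = Some (if n \<in> set u then \<theta> n else [])" for n
  have "sublist (if n \<in> set u then \<theta> n else []) w" for n
    using sublist_concat_map[of n u \<theta>] assms(3) sublist_order.order_trans by auto
  then have "\<forall>n. \<phi> n \<in> carrier (factor_monoid w)"
    by (simp add: factor_monoid_def \<phi>_def)
  then have "word_eval (factor_monoid w) \<phi> u = word_eval (factor_monoid w) \<phi> v"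
    using assms(1) unfolding satisfies_def by auto
  moreover have "word_eval (factor_monoid w) \<phi> x =
      (if sublist (concat (map \<theta> x)) w then Some (concat (map \<theta> x)) else None)"
    if "set x = set u" for x
  proof -
    have \<theta>: "map (\<lambda>n. the (\<phi> n)) x = map \<theta> x"
      using that by (auto simp: \<phi>_def)
    show ?thesis
      unfolding word_eval_factor_monoid \<theta> by (simp add: \<phi>_def)
  qed
  ultimately show ?thesis
    using assms(2,3) by (auto split: if_splits)
qed

lemma satisfies_factor_monoid_set_subset:
  fixes w :: "'x list"
  assumes "satisfies (factor_monoid w) (u, v)"
  shows "set u \<subseteq> set v"
proof -
  define \<phi> :: "nat \<Rightarrow> 'x list option"
    where "\<phi> n = (if n \<in> set v then Some [] else None)" for n
  have "\<forall>n. \<phi> n \<in> carrier (factor_monoid w)"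
    by (simp add: factor_monoid_def \<phi>_def)
  then have "word_eval (factor_monoid w) \<phi> u = word_eval (factor_monoid w) \<phi> v"
    using assms unfolding satisfies_def by auto
  moreover have "word_eval (factor_monoid w) \<phi> v = Some []"
  proof -
    have empty: "concat (map (\<lambda>n. the (\<phi> n)) v) = []"
      by (simp add: \<phi>_def)
    show ?thesis
      unfolding word_eval_factor_monoid empty by (simp add: \<phi>_def)
  qed
  ultimately have "word_eval (factor_monoid w) \<phi> u \<noteq> None"
    by simp
  then have "\<forall>a\<in>set u. \<phi> a \<noteq> None"
    unfolding word_eval_factor_monoid by meson
  then show ?thesis by (auto simp: \<phi>_def split: if_splits)
qed

section \<open>Identities of the factor monoids of \<open>w\<^sub>m\<^sub>,\<^sub>r\<close>\<close>

definition pad_word :: "nat \<Rightarrow> nat list \<Rightarrow> nat list" where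
  "pad_word m ns = replicate (m - 1) 0 @ concat (map (\<lambda>i. i # replicate (m - 1) 0) ns)"

lemma w_mr_eq_pad_word: "w_mr m r = pad_word m [1..<r+1]"
  by (simp add: w_mr_def pad_word_def)

lemma pad_word_Cons: "pad_word m (n # ns) = replicate (m - 1) 0 @ n # pad_word m ns"
  by (simp add: pad_word_def)

lemma sublist_append_Cons_notin:
  assumes "sublist s (A @ c # B)" "c \<notin> set s"
  shows "sublist s A \<or> sublist s B"
proof -
  from assms(1) consider "sublist s A" | "sublist s (c # B)"
    | s1 s2 where "s = s1 @ s2" "suffix s1 A" "prefix s2 (c # B)"
    unfolding sublist_append by blast
  then show ?thesis
  proof cases
    case 2
    then show ?thesis using assms(2) by (auto simp: sublist_Cons_right prefix_Cons)
  next
    case 3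
    then show ?thesis using assms(2) by (cases s2) (auto simp: prefix_Cons)
  qed auto
qed

lemma sublist_count_le: "sublist s w \<Longrightarrow> count (mset s) c \<le> count (mset w) c"
  by (auto simp: sublist_def)

lemma not_sublist_replicate_pad_word:
  assumes "m \<ge> 1" "0 \<notin> set ns"
  shows "\<not> sublist (replicate m 0) (pad_word m ns)"
  using assms(2)
proof (induction ns)
  case Nil
  then show ?case using assms(1) by (auto simp: pad_word_def dest: sublist_length_le)
next
  case (Cons n ns)
  show ?case
  proof
    assume "sublist (replicate m 0) (pad_word m (n # ns))"
    then have "sublist (replicate m 0) (replicate (m - 1) 0 @ n # pad_word m ns)"
      by (simp only: pad_word_Cons)
    moreover have "n \<notin> set (replicate m 0)" using Cons.prems by auto
    ultimately have "sublist (replicate m 0) (replicate (m - 1) (0::nat)) \<or>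
        sublist (replicate m 0) (pad_word m ns)"
      by (rule sublist_append_Cons_notin)
    then show False using Cons assms(1) by (auto dest: sublist_length_le)
  qed
qed

lemma count_pad_word_le_1:
  assumes "c \<noteq> 0" "distinct ns"
  shows "count (mset (pad_word m ns)) c \<le> 1"
  using assms(2)
proof (induction ns)
  case Nil
  then show ?case using assms by (simp add: pad_word_def)
next
  case (Cons n ns)
  have "c \<notin> set ns" if "n = c" using Cons.prems that by auto
  then have "n = c \<Longrightarrow> count (mset (pad_word m ns)) c = 0"
    using assms(1) by (simp add: pad_word_def count_eq_zero_iff)
  then show ?case using Cons assms(1) by (auto simp: pad_word_Cons)
qed

lemma not_factor_if_count_ge_2:
  assumes "c \<noteq> 0" "count (mset s) c \<ge> 2"
  shows "\<not> sublist s (w_mr m r)"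
proof
  assume "sublist s (w_mr m r)"
  then have "count (mset s) c \<le> count (mset (pad_word m [1..<r+1])) c"
    by (simp add: w_mr_eq_pad_word sublist_count_le)
  also have "\<dots> \<le> 1" using assms by (intro count_pad_word_le_1) auto
  finally show False using assms by simp
qed

lemma not_factor_if_x_power:
  assumes "m \<ge> 1" "sublist (replicate m 0) s"
  shows "\<not> sublist s (w_mr m r)"
proof
  assume "sublist s (w_mr m r)"
  then have "sublist (replicate m 0) (pad_word m [1..<r+1])"
    using assms(2) sublist_order.order_trans unfolding w_mr_eq_pad_word by blast
  then show False using not_sublist_replicate_pad_word[OF assms(1)] by simp
qed

lemma replicate_if_set_subset_singleton: "set X \<subseteq> {a} \<Longrightarrow> \<exists>k. X = replicate k a"
  by (metis replicate_length_same singletonD subsetD)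

lemma concat_replicate_replicate: "concat (replicate n (replicate k a)) = replicate (n * k) a"
  by (induction n) (simp_all add: replicate_add)

lemma sublist_replicate: "m \<le> n \<Longrightarrow> sublist (replicate m a) (replicate n a)"
  by (metis le_add_diff_inverse replicate_add sublist_append_rightI)

lemma count_concat_replicate: "count (mset (concat (replicate n X))) c = n * count (mset X) c"
  by (induction n) auto

lemma not_factor_power:
  assumes "m \<ge> 2" "X \<noteq> []" "sublist (concat (replicate m X)) s"
  shows "\<not> sublist s (w_mr m r)"
proof (cases "set X \<subseteq> {0}")
  case True
  obtain k where "X = replicate k 0"
    using replicate_if_set_subset_singleton[OF True] by blast
  then have "concat (replicate m X) = replicate (m * length X) 0"
    by (simp add: concat_replicate_replicate)
  moreover have "m \<le> m * length X" using assms(2) by (cases X) auto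
  ultimately have "sublist (replicate m 0) (concat (replicate m X))"
    by (simp add: sublist_replicate)
  then have "sublist (replicate m 0) s"
    using assms(3) by (rule sublist_order.order_trans)
  then show ?thesis
    using assms(1) by (intro not_factor_if_x_power) simp_all
next
  case False
  then obtain c where c: "c \<in> set X" "c \<noteq> 0" by auto
  have "1 \<le> count (mset X) c"
    using c(1) by (simp add: Suc_le_eq)
  then have "m * 1 \<le> m * count (mset X) c"
    by (rule mult_le_mono2)
  then have "2 \<le> m * count (mset X) c"
    using assms(1) by linarith
  then have "count (mset s) c \<ge> 2"
    using sublist_count_le[OF assms(3), of c] count_concat_replicate[of m X c] by linarith
  then show ?thesis using not_factor_if_count_ge_2 c(2) by blast
qed

lemma not_factor_if_noncommuting:
  assumes "X @ Y \<noteq> Y @ X"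
    and "\<And>c. count (mset s) c \<ge> 2 * count (mset X) c + 2 * count (mset Y) c"
  shows "\<not> sublist s (w_mr m r)"
proof -
  have "\<not> (set X \<subseteq> {0} \<and> set Y \<subseteq> {0})"
  proof
    assume "set X \<subseteq> {0} \<and> set Y \<subseteq> {0}"
    then obtain a b where "X = replicate a 0" "Y = replicate b 0"
      using replicate_if_set_subset_singleton[of X 0] replicate_if_set_subset_singleton[of Y 0]
      by blast
    then show False
      using assms(1) by (simp flip: replicate_add add: add.commute)
  qed
  then obtain c where "c \<noteq> 0" "c \<in> set X \<or> c \<in> set Y" by auto
  moreover from this(2) have "count (mset X) c + count (mset Y) c \<ge> 1"
    by (auto simp: Suc_le_eq)
  then have "count (mset s) c \<ge> 2"
    using assms(2)[of c] by linarith
  ultimately show ?thesis using not_factor_if_count_ge_2 by blast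
qed

lemma factor_monoid_w_mr_satisfies_E:
  assumes "m \<ge> 2" "idt \<in> E_ids m"
  shows "satisfies (factor_monoid (w_mr m r)) idt"
proof -
  have O: "satisfies (factor_monoid (w_mr m r)) idt" if "idt \<in> O_ids"
    using that unfolding O_ids_def
    by (auto intro!: satisfies_factor_monoidI elim!: notE[OF not_factor_if_noncommuting]) simp_all
  have "satisfies (factor_monoid (w_mr m r)) (replicate (m + 1) 0, replicate m 0)"
    using assms(1) not_factor_power[OF assms(1)]
    by (intro satisfies_factor_monoidI) (auto simp: map_replicate_const)
  moreover have "satisfies (factor_monoid (w_mr m r)) (replicate m 0 @ [2], [2] @ replicate m 0)"
  proof (rule satisfies_factor_monoidI)
    fix \<theta> :: "nat \<Rightarrow> nat list"
    assume "concat (map \<theta> (replicate m 0 @ [2])) \<noteq> concat (map \<theta> ([2] @ replicate m 0))"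
    then have "\<theta> 0 \<noteq> []" by auto
    from not_factor_power[OF assms(1) this]
    show "\<not> sublist (concat (map \<theta> (replicate m 0 @ [2]))) (w_mr m r) \<and>
        \<not> sublist (concat (map \<theta> ([2] @ replicate m 0))) (w_mr m r)"
      by (simp add: map_replicate_const)
  qed auto
  ultimately show ?thesis using assms(2) O unfolding E_ids_def by auto
qed

section \<open>Blocks between linear letters\<close>

fun blocks :: "('x \<Rightarrow> bool) \<Rightarrow> 'x list \<Rightarrow> 'x list list" where
  "blocks P [] = [[]]"
| "blocks P (a # w) =
    (if P a then [] # blocks P w else (a # hd (blocks P w)) # tl (blocks P w))"

fun interleave :: "'x list list \<Rightarrow> 'x list list \<Rightarrow> 'x list" where
  "interleave [] ss = []"
| "interleave (b # bs) [] = b"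
| "interleave (b # bs) (s # ss) = b @ s @ interleave bs ss"

lemma blocks_not_Nil [simp]: "blocks P w \<noteq> []"
  by (induction w) auto

lemma hd_tl_blocks: "hd (blocks P w) # tl (blocks P w) = blocks P w"
  by simp

lemma interleave_append_hd: "interleave ((A @ b) # bs) ss = A @ interleave (b # bs) ss"
  by (cases ss) auto

lemma interleave_blocks: "interleave (blocks P w) (map (\<lambda>t. [t]) (filter P w)) = w"
proof (induction w)
  case (Cons a w)
  then show ?case
    using interleave_append_hd[of "[a]" "hd (blocks P w)" "tl (blocks P w)"]
    by (simp add: hd_tl_blocks)
qed simp

lemma length_blocks: "length (blocks P w) = Suc (length (filter P w))"
proof (induction w)
  case (Cons a w)
  then show ?case using length_tl[of "blocks P w"] by simp
qed simp

lemma hd_blocks_prefix: "prefix (hd (blocks P w)) w"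
  by (induction w) auto

lemma hd_in_set_blocks: "hd (blocks P w) \<in> set (blocks P w)"
  by (simp add: hd_in_set)

lemma set_tl_blocks: "set (tl (blocks P w)) \<subseteq> set (blocks P w)"
  by (metis blocks_not_Nil list.set_sel(2) subsetI)

lemma blocks_sublist: "b \<in> set (blocks P w) \<Longrightarrow> \<exists>p q. w = p @ b @ q"
proof (induction w arbitrary: b)
  case (Cons a w)
  consider "b = []" | "b \<in> set (blocks P w)" | "b = a # hd (blocks P w)"
    using Cons.prems set_tl_blocks[of P w] by (auto split: if_splits)
  then show ?case
  proof cases
    case 2
    then show ?thesis using Cons.IH by (metis append_Cons)
  next
    case 3
    obtain zs where "w = hd (blocks P w) @ zs"
      using hd_blocks_prefix[of P w] by (auto simp: prefix_def)
    then have "a # w = [] @ b @ zs" using 3 by simp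
    then show ?thesis by blast
  qed auto
qed simp

lemma blocks_letters: "b \<in> set (blocks P w) \<Longrightarrow> y \<in> set b \<Longrightarrow> \<not> P y \<and> y \<in> set w"
proof (induction w arbitrary: b)
  case (Cons a w)
  then show ?case
    using Cons.IH[OF hd_in_set_blocks] Cons.IH[OF subsetD[OF set_tl_blocks]]
    by (auto split: if_splits)
qed simp

lemma blocks_filter:
  assumes "\<And>y. P y \<Longrightarrow> Q y"
  shows "blocks P (filter Q w) = map (filter Q) (blocks P w)"
proof (induction w)
  case (Cons a w)
  have "map (filter Q) (blocks P w) = filter Q (hd (blocks P w)) # map (filter Q) (tl (blocks P w))"
    by (metis hd_tl_blocks list.simps(9))
  then show ?case
    using Cons assms by (auto simp: hd_map map_tl)
qed simp

lemma filter_eq_interleave_blocks: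
  assumes "\<And>y. P y \<Longrightarrow> Q y"
  shows "filter Q w = interleave (map (filter Q) (blocks P w)) (map (\<lambda>t. [t]) (filter P w))"
proof -
  have "filter P (filter Q w) = filter P w"
    using assms by (auto simp: filter_filter intro: filter_cong)
  then show ?thesis
    using interleave_blocks[of P "filter Q w"] blocks_filter[of P Q, OF assms] by simp
qed

lemma count_ge_2_other_occurrence:
  assumes "count (mset (p @ a # q)) a \<ge> 2"
  shows "a \<in> set p \<or> a \<in> set q"
  using assms by (auto simp flip: count_mset_0_iff)

lemma mset_replicate_count_filter:
  "mset (replicate (count (mset s) x) x @ filter (\<lambda>y. y \<noteq> x) s) = mset s"
  by (induction s) auto

section \<open>Normal forms in \<open>E\<^sub>m\<close>\<close>

definition linear_letter :: "nat list \<Rightarrow> nat \<Rightarrow> bool" where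
  "linear_letter u y \<longleftrightarrow> count (mset u) y = 1"

definition saturated :: "nat \<Rightarrow> nat list \<Rightarrow> nat set" where
  "saturated m u = {x \<in> set u. \<not> linear_letter u x \<and>
     (\<exists>b\<in>set (blocks (linear_letter u) u). m \<le> count (mset b) x)}"

definition normal_form :: "nat \<Rightarrow> nat list \<Rightarrow> nat list" where
  "normal_form m u =
     concat (map (\<lambda>x. replicate m x) (sorted_list_of_set (saturated m u))) @
     interleave (map (\<lambda>b. sort (filter (\<lambda>y. y \<notin> saturated m u) b)) (blocks (linear_letter u) u))
       (map (\<lambda>t. [t]) (filter (linear_letter u) u))"

definition heavy_factor :: "nat \<Rightarrow> nat list \<Rightarrow> nat \<Rightarrow> bool" where
  "heavy_factor m u x \<longleftrightarrow> (\<exists>p s q. u = p @ s @ q \<and> (\<forall>y\<in>set s. count (mset u) y \<ge> 2)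
                        \<and> count (mset s) x \<ge> m)"

lemma count_ge_2_if_not_linear: "y \<in> set u \<Longrightarrow> \<not> linear_letter u y \<Longrightarrow> count (mset u) y \<ge> 2"
  unfolding linear_letter_def by (metis One_nat_def count_mset_0_iff less_2_cases not_le)

lemma saturated_heavy_factor:
  assumes "x \<in> saturated m u"
  shows "heavy_factor m u x"
proof -
  from assms obtain b where b: "b \<in> set (blocks (linear_letter u) u)" "count (mset b) x \<ge> m"
    unfolding saturated_def by auto
  obtain p q where "u = p @ b @ q" using blocks_sublist[OF b(1)] by blast
  moreover have "\<forall>y\<in>set b. count (mset u) y \<ge> 2"
    using blocks_letters[OF b(1)] count_ge_2_if_not_linear by blast
  ultimately show ?thesis using b(2) unfolding heavy_factor_def by blast
qed

lemma heavy_factor_filter: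
  assumes "heavy_factor m u x'" "x' \<noteq> x"
  shows "heavy_factor m (filter (\<lambda>y. y \<noteq> x) u) x'"
proof -
  obtain p s q where u: "u = p @ s @ q" "\<forall>y\<in>set s. count (mset u) y \<ge> 2" "count (mset s) x' \<ge> m"
    using assms(1) unfolding heavy_factor_def by blast
  let ?f = "filter (\<lambda>y. y \<noteq> x)"
  have "?f u = ?f p @ ?f s @ ?f q" using u by simp
  moreover have "\<forall>y\<in>set (?f s). count (mset (?f u)) y \<ge> 2" using u(2) by auto
  moreover have "count (mset (?f s)) x' \<ge> m" using u(3) assms(2) by simp
  ultimately show ?thesis unfolding heavy_factor_def by blast
qed

locale E_eval = monoid G for G :: "('a, 'b) monoid_scheme" (structure) +
  fixes m :: nat and \<phi> :: "nat \<Rightarrow> 'a"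
  assumes satisfies_E: "\<And>idt. idt \<in> E_ids m \<Longrightarrow> satisfies G idt"
    and \<phi>_closed: "\<And>n. \<phi> n \<in> carrier G"
begin

abbreviation ev :: "nat list \<Rightarrow> 'a" where "ev \<equiv> word_eval G \<phi>"

lemma ev_closed [simp]: "ev w \<in> carrier G"
  by (induction w) (auto simp: \<phi>_closed)

lemma ev_append [simp]: "ev (u @ v) = ev u \<otimes> ev v"
  by (induction u) (auto simp: m_assoc \<phi>_closed)

lemma ev_concat_map: "ev (concat (map \<sigma> w)) = word_eval G (\<lambda>n. ev (\<sigma> n)) w"
  by (induction w) auto

lemma ev_subst_identity:
  assumes "(l, r) \<in> E_ids m"
  shows "ev (p @ concat (map \<sigma> l) @ q) = ev (p @ concat (map \<sigma> r) @ q)"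
proof -
  have "word_eval G (\<lambda>n. ev (\<sigma> n)) l = word_eval G (\<lambda>n. ev (\<sigma> n)) r"
    using satisfies_E[OF assms] unfolding satisfies_def by auto
  then show ?thesis by (simp add: ev_concat_map)
qed

lemma ev_O1: "ev (p @ A @ B @ C @ A @ D @ B @ q) = ev (p @ B @ A @ C @ A @ D @ B @ q)"
  using ev_subst_identity[of "[0, 1, 2, 0, 3, 1]" "[1, 0, 2, 0, 3, 1]" p "(!) [A, B, C, D]" q]
  by (simp add: E_ids_def O_ids_def del: ev_append)

lemma ev_O2: "ev (p @ A @ C @ A @ B @ D @ B @ q) = ev (p @ A @ C @ B @ A @ D @ B @ q)"
  using ev_subst_identity[of "[0, 2, 0, 1, 3, 1]" "[0, 2, 1, 0, 3, 1]" p "(!) [A, B, C, D]" q]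
  by (simp add: E_ids_def O_ids_def del: ev_append)

lemma ev_O3: "ev (p @ A @ C @ B @ D @ A @ B @ q) = ev (p @ A @ C @ B @ D @ B @ A @ q)"
  using ev_subst_identity[of "[0, 2, 1, 3, 0, 1]" "[0, 2, 1, 3, 1, 0]" p "(!) [A, B, C, D]" q]
  by (simp add: E_ids_def O_ids_def del: ev_append)

lemma ev_swap_before_right:
  assumes "a \<in> set q" "b \<in> set q"
  shows "ev (p @ a # b # q) = ev (p @ b # a # q)"
proof -
  obtain q1 q2 where q: "q = q1 @ a # q2" "a \<notin> set q1"
    using assms(1) split_list_first by metis
  consider "b = a" | q3 q4 where "q2 = q3 @ b # q4" | q3 q4 where "q1 = q3 @ b # q4"
    using assms(2) q by (auto dest: split_list)
  then show ?thesis
  proof cases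
    case 2
    then show ?thesis using ev_O1[of p "[a]" "[b]" q1 q3 q4] q by (simp del: ev_append)
  next
    case 3
    then show ?thesis using ev_O1[of p "[b]" "[a]" q3 q4 q2] q by (simp del: ev_append)
  qed simp
qed

lemma ev_swap_after_left:
  assumes "a \<in> set p" "b \<in> set p"
  shows "ev (p @ a # b # q) = ev (p @ b # a # q)"
proof -
  obtain p1 p2 where p: "p = p1 @ a # p2"
    using assms(1) split_list by metis
  consider "b = a" | p3 p4 where "p2 = p3 @ b # p4" | p3 p4 where "p1 = p3 @ b # p4"
    using assms(2) p by (auto dest: split_list)
  then show ?thesis
  proof cases
    case 2
    then show ?thesis using ev_O3[of p1 "[a]" p3 "[b]" p4 q] p by (simp del: ev_append)
  next
    case 3
    then show ?thesis using ev_O3[of p3 "[b]" p4 "[a]" p2 q] p by (simp del: ev_append)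
  qed simp
qed

lemma ev_swap_between:
  assumes "a \<in> set p" "b \<in> set q"
  shows "ev (p @ a # b # q) = ev (p @ b # a # q)"
proof -
  obtain p1 p2 where "p = p1 @ a # p2" using assms(1) split_list by metis
  moreover obtain q1 q2 where "q = q1 @ b # q2" using assms(2) split_list by metis
  ultimately show ?thesis using ev_O2[of p1 "[a]" p2 "[b]" q1 q2] by (simp del: ev_append)
qed

lemma ev_swap:
  assumes "a \<in> set p \<or> a \<in> set q" "b \<in> set p \<or> b \<in> set q"
  shows "ev (p @ a # b # q) = ev (p @ b # a # q)"
  using assms ev_swap_before_right ev_swap_after_left ev_swap_between ev_swap_between[of b p a q]
  by metis

lemma ev_insort:
  assumes "\<forall>y\<in>set (a # l). count (mset (p @ a # l @ q)) y \<ge> 2"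
  shows "ev (p @ a # l @ q) = ev (p @ insort a l @ q)"
  using assms
proof (induction l arbitrary: p)
  case (Cons b l)
  show ?case
  proof (cases "a \<le> b")
    case False
    have "count (mset (p @ a # (b # l @ q))) a \<ge> 2" "count (mset ((p @ [a]) @ b # (l @ q))) b \<ge> 2"
      using Cons.prems by simp_all
    from this[THEN count_ge_2_other_occurrence] have "ev (p @ a # b # (l @ q)) = ev (p @ b # a # (l @ q))"
      using False by (intro ev_swap) auto
    also have "\<dots> = ev ((p @ [b]) @ a # l @ q)" by (simp del: ev_append)
    also have "\<dots> = ev ((p @ [b]) @ insort a l @ q)"
      by (rule Cons.IH) (use Cons.prems in auto)
    finally show ?thesis using False by (simp del: ev_append)
  qed simp
qed simp

lemma ev_sort:
  assumes "\<forall>y\<in>set s. count (mset (p @ s @ q)) y \<ge> 2"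
  shows "ev (p @ s @ q) = ev (p @ sort s @ q)"
  using assms
proof (induction s arbitrary: p)
  case (Cons a s)
  have "ev (p @ (a # s) @ q) = ev ((p @ [a]) @ s @ q)" by (simp del: ev_append)
  also have "\<dots> = ev ((p @ [a]) @ sort s @ q)"
    by (rule Cons.IH) (use Cons.prems in auto)
  also have "\<dots> = ev (p @ a # sort s @ q)" by (simp del: ev_append)
  also have "\<dots> = ev (p @ insort a (sort s) @ q)"
    by (rule ev_insort) (use Cons.prems in auto)
  finally show ?case by simp
qed simp

lemma ev_perm:
  assumes "mset s = mset s'" "\<forall>y\<in>set s. count (mset (p @ s @ q)) y \<ge> 2"
  shows "ev (p @ s @ q) = ev (p @ s' @ q)"
proof -
  have "\<forall>y\<in>set s'. count (mset (p @ s' @ q)) y \<ge> 2"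
    using assms by (metis mset_append mset_eq_setD)
  then show ?thesis
    using ev_sort assms by (metis sorted_list_of_multiset_mset)
qed

lemma x_power_central: "ev (replicate m x) \<otimes> ev w = ev w \<otimes> ev (replicate m x)"
proof -
  have "ev ([] @ concat (map ((!) [[x], [], w, []]) (replicate m 0 @ [2])) @ []) =
        ev ([] @ concat (map ((!) [[x], [], w, []]) ([2] @ replicate m 0)) @ [])"
    by (rule ev_subst_identity) (simp add: E_ids_def)
  then show ?thesis by simp
qed

lemma x_power_idempotent: "ev (replicate (Suc m) x) = ev (replicate m x)"
proof -
  have "ev ([] @ concat (map ((!) [[x], [], [], []]) (replicate (m + 1) 0)) @ []) =
        ev ([] @ concat (map ((!) [[x], [], [], []]) (replicate m 0)) @ [])"
    by (rule ev_subst_identity) (simp add: E_ids_def)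
  then show ?thesis by (simp del: ev_append)
qed

lemma ev_move_x_power: "ev (p @ replicate m x @ q) = ev (replicate m x @ p @ q)"
proof -
  have "ev (p @ replicate m x @ q) = (ev p \<otimes> ev (replicate m x)) \<otimes> ev q"
    by (simp add: m_assoc)
  also have "\<dots> = (ev (replicate m x) \<otimes> ev p) \<otimes> ev q"
    by (simp only: x_power_central)
  also have "\<dots> = ev (replicate m x @ p @ q)"
    by (simp add: m_assoc)
  finally show ?thesis .
qed

lemma ev_x_power_filter: "ev (replicate m x @ w) = ev (replicate m x @ filter (\<lambda>y. y \<noteq> x) w)"
proof (induction w)
  case (Cons a w)
  show ?case
  proof (cases "a = x")
    case True
    have "ev (replicate m x @ a # w) = ev (replicate (Suc m) x @ w)"
      using True by (simp add: replicate_app_Cons_same del: ev_append)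
    also have "\<dots> = ev (replicate m x @ w)"
      by (simp only: ev_append x_power_idempotent)
    finally show ?thesis using Cons True by simp
  next
    case False
    have "ev (replicate m x @ a # w) = ev [a] \<otimes> ev (replicate m x @ w)"
      using ev_move_x_power[of "[a]" x w] by (simp add: \<phi>_closed)
    also have "\<dots> = ev [a] \<otimes> ev (replicate m x @ filter (\<lambda>y. y \<noteq> x) w)"
      by (simp only: Cons.IH)
    also have "\<dots> = ev (replicate m x @ filter (\<lambda>y. y \<noteq> x) (a # w))"
      using ev_move_x_power[of "[a]" x "filter (\<lambda>y. y \<noteq> x) w"] False by (simp add: \<phi>_closed)
    finally show ?thesis .
  qed
qed simp

lemma ev_heavy_factor:
  assumes "heavy_factor m u x"
  shows "ev u = ev (replicate m x @ filter (\<lambda>y. y \<noteq> x) u)"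
proof -
  obtain p s q where u: "u = p @ s @ q" "\<forall>y\<in>set s. count (mset u) y \<ge> 2"
    "count (mset s) x \<ge> m"
    using assms unfolding heavy_factor_def by blast
  define k where "k = count (mset s) x"
  define s' where "s' = filter (\<lambda>y. y \<noteq> x) s"
  have "mset s = mset ((replicate (k - m) x @ replicate m x) @ s')"
    using u(3) mset_replicate_count_filter[of s x]
    unfolding k_def s'_def replicate_add[symmetric] by simp
  moreover have "\<forall>y\<in>set s. count (mset (p @ s @ q)) y \<ge> 2"
    using u(2) unfolding u(1) .
  ultimately have "ev (p @ s @ q) = ev (p @ ((replicate (k - m) x @ replicate m x) @ s') @ q)"
    by (rule ev_perm)
  then have "ev u = ev (p @ (replicate (k - m) x @ replicate m x) @ s' @ q)"
    using u(1) by (simp del: ev_append)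
  also have "\<dots> = ev (replicate m x @ (p @ replicate (k - m) x) @ s' @ q)"
    using ev_move_x_power[of "p @ replicate (k - m) x" x "s' @ q"] by (simp del: ev_append)
  also have "\<dots> = ev (replicate m x @ filter (\<lambda>y. y \<noteq> x) ((p @ replicate (k - m) x) @ s' @ q))"
    by (rule ev_x_power_filter)
  also have "filter (\<lambda>y. y \<noteq> x) ((p @ replicate (k - m) x) @ s' @ q) = filter (\<lambda>y. y \<noteq> x) u"
    using u(1) unfolding s'_def by simp
  finally show ?thesis .
qed

lemma ev_heavy_factors:
  assumes "distinct xs" "\<forall>x\<in>set xs. heavy_factor m u x"
  shows "ev u = ev (concat (map (\<lambda>x. replicate m x) xs) @ filter (\<lambda>y. y \<notin> set xs) u)"
  using assms
proof (induction xs arbitrary: u)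
  case (Cons x xs)
  have "ev u = ev (replicate m x) \<otimes> ev (filter (\<lambda>y. y \<noteq> x) u)"
    using Cons.prems ev_heavy_factor by simp
  also have "ev (filter (\<lambda>y. y \<noteq> x) u) =
      ev (concat (map (\<lambda>x. replicate m x) xs) @ filter (\<lambda>y. y \<notin> set xs) (filter (\<lambda>y. y \<noteq> x) u))"
    using Cons.prems by (intro Cons.IH) (auto intro: heavy_factor_filter)
  also have "filter (\<lambda>y. y \<notin> set xs) (filter (\<lambda>y. y \<noteq> x) u) = filter (\<lambda>y. y \<notin> set (x # xs)) u"
    by (auto simp: filter_filter intro: filter_cong)
  finally show ?case by (simp add: m_assoc)
qed simp

lemma ev_interleave_sort:
  assumes "length bs = Suc (length ss)"
    and "\<forall>y\<in>set (concat bs). count (mset (p @ interleave bs ss)) y \<ge> 2"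
  shows "ev (p @ interleave bs ss) = ev (p @ interleave (map sort bs) ss)"
  using assms
proof (induction ss arbitrary: bs p)
  case Nil
  then obtain b where "bs = [b]" by (cases bs) auto
  then show ?case using Nil.prems ev_sort[of b p "[]"] by simp
next
  case (Cons s ss)
  then obtain b bs' where bs: "bs = b # bs'" by (cases bs) auto
  have "ev (p @ interleave bs (s # ss)) = ev (p @ sort b @ (s @ interleave bs' ss))"
    using Cons.prems bs ev_sort[of b p "s @ interleave bs' ss"] by (simp del: ev_append)
  also have "\<dots> = ev ((p @ sort b @ s) @ interleave (map sort bs') ss)"
  proof -
    have "mset ((p @ sort b @ s) @ interleave bs' ss) = mset (p @ interleave bs (s # ss))"
      using bs by simp
    then have "ev ((p @ sort b @ s) @ interleave bs' ss) = ev ((p @ sort b @ s) @ interleave (map sort bs') ss)"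
      using Cons.prems bs by (intro Cons.IH) simp_all
    then show ?thesis by (simp del: ev_append)
  qed
  finally show ?case using bs by (simp del: ev_append)
qed

lemma ev_normal_form: "ev u = ev (normal_form m u)"
proof -
  let ?S = "saturated m u"
  let ?P = "linear_letter u"
  let ?Q = "\<lambda>y. y \<notin> ?S"
  let ?bs = "map (filter ?Q) (blocks ?P u)"
  let ?ts = "map (\<lambda>t. [t]) (filter ?P u)"
  have fin: "finite ?S" unfolding saturated_def by simp
  have "ev u = ev (concat (map (\<lambda>x. replicate m x) (sorted_list_of_set ?S)) @ filter ?Q u)"
    using ev_heavy_factors[of "sorted_list_of_set ?S" u] fin saturated_heavy_factor by simp
  moreover have interleave: "filter ?Q u = interleave ?bs ?ts"
    by (rule filter_eq_interleave_blocks) (auto simp: saturated_def)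
  moreover have "ev ([] @ interleave ?bs ?ts) = ev ([] @ interleave (map sort ?bs) ?ts)"
  proof (rule ev_interleave_sort)
    show "length ?bs = Suc (length ?ts)" by (simp add: length_blocks)
    have "count (mset (filter ?Q u)) y \<ge> 2" if "y \<in> set (concat ?bs)" for y
      using that blocks_letters count_ge_2_if_not_linear by fastforce
    then show "\<forall>y\<in>set (concat ?bs). count (mset ([] @ interleave ?bs ?ts)) y \<ge> 2"
      unfolding interleave by simp
  qed
  ultimately show ?thesis
    unfolding normal_form_def by (simp add: comp_def)
qed

end

section \<open>Identities of all \<open>M(w\<^sub>m\<^sub>,\<^sub>r)\<close> determine the normal form\<close>

lemma concat_map_eq_interleave_counts:
  assumes "\<And>y. \<theta> y = (if P y then g y else if y = x then [0] else [])"
  shows "concat (map \<theta> w) =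
    interleave (map (\<lambda>b. replicate (count (mset b) x) (0::nat)) (blocks P w)) (map g (filter P w))"
proof (induction w)
  case (Cons a w)
  define R where "R b = replicate (count (mset b) x) (0::nat)" for b
  show ?case
  proof (cases "P a")
    case False
    have "R (a # hd (blocks P w)) = \<theta> a @ R (hd (blocks P w))"
      using assms[of a] False by (simp add: R_def)
    moreover have "R (hd (blocks P w)) # map R (tl (blocks P w)) = map R (blocks P w)"
      by (metis hd_tl_blocks list.simps(9))
    ultimately have "interleave (map R (blocks P (a # w))) (map g (filter P (a # w))) =
        \<theta> a @ interleave (map R (blocks P w)) (map g (filter P w))"
      using False interleave_append_hd[of "\<theta> a" "R (hd (blocks P w))"] by simp
    then show ?thesis using Cons unfolding R_def by simp
  qed (use Cons assms in simp)
qed simp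

lemma replicate_Suc_Cons_eq:
  assumes "replicate c (0::nat) @ Suc i # X = replicate c' 0 @ Suc i' # Y"
  shows "c = c' \<and> i = i' \<and> X = Y"
  using assms
proof (induction c arbitrary: c')
  case 0
  then show ?case by (cases c') auto
next
  case (Suc c)
  then show ?case by (cases c') auto
qed

lemma replicate_neq_replicate_Suc_Cons: "replicate c (0::nat) \<noteq> replicate c' 0 @ Suc i # Y"
  by (metis Zero_not_Suc in_set_conv_decomp in_set_replicate)

lemma interleave_zero_runs_inj:
  assumes "interleave (map (\<lambda>c. replicate c (0::nat)) a) (map (\<lambda>i. Suc i # replicate (h i) 0) ns) =
           interleave (map (\<lambda>c. replicate c 0) b) (map (\<lambda>i. Suc i # replicate (h i) 0) ns')"
    and "length a = Suc (length ns)" "length b = Suc (length ns')"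
  shows "ns = ns' \<and> a = b"
  using assms
proof (induction ns arbitrary: ns' a b)
  case Nil
  then obtain c where a: "a = [c]" by (cases a) auto
  show ?case
  proof (cases ns')
    case Nil
    then obtain d where "b = [d]" using Nil.prems by (cases b) auto
    then show ?thesis using Nil.prems a \<open>ns' = []\<close> by simp
  next
    case (Cons j ns')
    then obtain d b' where "b = d # b'" using Nil.prems by (cases b) auto
    then show ?thesis
      using Nil.prems a Cons replicate_neq_replicate_Suc_Cons by (simp del: replicate_eq_replicate)
  qed
next
  case (Cons i ns)
  then obtain c a' where a: "a = c # a'" by (cases a) auto
  show ?case
  proof (cases ns')
    case Nil
    then obtain d where "b = [d]" using Cons.prems by (cases b) auto
    then show ?thesis
      using Cons.prems(1) a Nil replicate_neq_replicate_Suc_Cons[of d c i, symmetric]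
      by (simp del: replicate_eq_replicate)
  next
    case (Cons j ns'')
    then obtain d b' where b: "b = d # b'" using Cons.prems by (cases b) auto
    have "replicate c (0::nat) @ Suc i # (replicate (h i) 0 @
          interleave (map (\<lambda>c. replicate c 0) a') (map (\<lambda>i. Suc i # replicate (h i) 0) ns)) =
        replicate d 0 @ Suc j # (replicate (h j) 0 @
          interleave (map (\<lambda>c. replicate c 0) b') (map (\<lambda>i. Suc i # replicate (h i) 0) ns''))"
      using Cons.prems(1) a b Cons by simp
    then have "c = d" "i = j" and rest:
        "interleave (map (\<lambda>c. replicate c 0) a') (map (\<lambda>i. Suc i # replicate (h i) 0) ns) =
         interleave (map (\<lambda>c. replicate c 0) b') (map (\<lambda>i. Suc i # replicate (h i) 0) ns'')"
      by (auto dest: replicate_Suc_Cons_eq)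
    then show ?thesis using Cons.IH[OF rest] Cons.prems(2,3) a b Cons by simp
  qed
qed

lemma interleave_zero_runs_eq:
  assumes "length a = Suc k" "\<forall>c\<in>set a. c \<le> m - 1"
  shows "interleave (map (\<lambda>c. replicate c (0::nat)) a)
      (map (\<lambda>i. Suc (n + i) # replicate (m - 1 - a ! Suc i) 0) [0..<k]) =
    replicate (a ! 0) 0 @ concat (map (\<lambda>i. Suc (n + i) # replicate (m - 1) 0) [0..<k])"
  using assms
proof (induction k arbitrary: a n)
  case 0
  then obtain c where "a = [c]" by (cases a) auto
  then show ?case by simp
next
  case (Suc k)
  then obtain c d a' where a: "a = c # d # a'" by (metis length_Suc_conv)
  have upt: "[0..<Suc k] = 0 # map Suc [0..<k]" by (simp add: map_Suc_upt upt_conv_Cons)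
  have "replicate (m - 1 - d) (0::nat) @ replicate d 0 = replicate (m - 1) 0"
    using Suc.prems a by (simp flip: replicate_add) linarith
  moreover have "interleave (map (\<lambda>c. replicate c (0::nat)) (d # a'))
      (map (\<lambda>i. Suc (Suc n + i) # replicate (m - 1 - (d # a') ! Suc i) 0) [0..<k]) =
    replicate d 0 @ concat (map (\<lambda>i. Suc (Suc n + i) # replicate (m - 1) 0) [0..<k])"
    using Suc.IH[of "d # a'" "Suc n"] Suc.prems a by simp
  ultimately show ?case
    unfolding upt using a by (simp add: comp_def del: upt_Suc)
qed

lemma interleave_zero_runs_sublist_w_mr:
  assumes "length a = Suc k" "\<forall>c\<in>set a. c < m"
  shows "sublist (interleave (map (\<lambda>c. replicate c (0::nat)) a)
      (map (\<lambda>i. Suc i # replicate (m - 1 - a ! Suc i) 0) [0..<k])) (w_mr m (Suc k))"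
proof -
  have le: "\<forall>c\<in>set a. c \<le> m - 1"
    using assms(2) by auto
  then have "a ! 0 \<le> m - 1"
    using assms(1) by (simp add: nth_mem)
  have "w_mr m (Suc k) = replicate (m - 1) 0 @ concat (map (\<lambda>i. i # replicate (m - 1) 0) (map Suc [0..<Suc k]))"
    unfolding w_mr_def by (simp add: map_Suc_upt)
  also have "\<dots> = replicate (m - 1 - a ! 0) 0 @
      (replicate (a ! 0) 0 @ concat (map (\<lambda>i. Suc (0 + i) # replicate (m - 1) 0) [0..<k])) @
      (Suc k # replicate (m - 1) 0)"
    using \<open>a ! 0 \<le> m - 1\<close> by (simp add: comp_def flip: replicate_add)
  also have "replicate (a ! 0) 0 @ concat (map (\<lambda>i. Suc (0 + i) # replicate (m - 1) 0) [0..<k]) =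
      interleave (map (\<lambda>c. replicate c 0) a) (map (\<lambda>i. Suc i # replicate (m - 1 - a ! Suc i) 0) [0..<k])"
    using interleave_zero_runs_eq[OF assms(1) le, of 0] by simp
  finally show ?thesis
    by (simp only: sublist_appendI)
qed

primrec position :: "'x list \<Rightarrow> 'x \<Rightarrow> nat" where
  "position [] y = 0"
| "position (t # ts) y = (if t = y then 0 else Suc (position ts y))"

lemma position_nth: "distinct ts \<Longrightarrow> i < length ts \<Longrightarrow> position ts (ts ! i) = i"
proof (induction ts arbitrary: i)
  case (Cons t ts)
  then show ?case by (cases i) (auto simp: nth_mem)
qed simp

lemma nth_position: "y \<in> set ts \<Longrightarrow> ts ! position ts y = y"
  by (induction ts) auto

lemma distinct_filter_linear_letter: "distinct (filter (linear_letter u) u)"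
  unfolding distinct_count_atmost_1 linear_letter_def
  by simp (metis count_mset_0_iff nat.distinct(1))

lemma w_mr_identity_preserves_blocks:
  assumes "satisfies (factor_monoid (w_mr m (Suc (length (filter (linear_letter u) u))))) (u, v)"
    and "set u = set v"
    and "\<forall>b\<in>set (blocks (linear_letter u) u). count (mset b) x < m"
  shows "filter (linear_letter u) v = filter (linear_letter u) u \<and>
    map (\<lambda>b. count (mset b) x) (blocks (linear_letter u) v) =
    map (\<lambda>b. count (mset b) x) (blocks (linear_letter u) u)"
proof -
  define P where "P = linear_letter u"
  define ts where "ts = filter P u"
  define k where "k = length ts"
  define a where "a w = map (\<lambda>b. count (mset b) x) (blocks P w)" for w
  \<comment> \<open>In \<open>w_mr\<close> the letter \<open>0\<close> is \<open>x\<close> and \<open>Suc i\<close> is \<open>t\<^sub>i\<^sub>+\<^sub>1\<close>. The \<open>i\<close>-th linear letter of \<open>u\<close> is sent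
    to \<open>t\<^sub>i\<^sub>+\<^sub>1\<close> followed by as many \<open>x\<close> as the next block of \<open>u\<close> misses to an \<open>x\<close>-run of
    length \<open>m - 1\<close>, so that \<open>\<theta> u\<close> becomes a factor of \<open>w_mr m (Suc k)\<close>.\<close>
  define h where "h i = m - 1 - a u ! Suc i" for i
  define g where "g y = Suc (position ts y) # replicate (h (position ts y)) (0::nat)" for y
  define \<theta> where "\<theta> y = (if P y then g y else if y = x then [0] else [])" for y
  have \<theta>_interleave: "concat (map \<theta> w) = interleave (map (\<lambda>c. replicate c 0) (a w)) (map g (filter P w))"
    for w
    unfolding concat_map_eq_interleave_counts[of \<theta> P g x, OF \<theta>_def] a_def by (simp add: comp_def)
  have g_ts: "map g ts = map (\<lambda>i. Suc i # replicate (m - 1 - a u ! Suc i) 0) [0..<k]"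
  proof -
    have "map g ts = map g (map ((!) ts) [0..<k])" unfolding k_def by (simp add: map_nth)
    then show ?thesis
      using distinct_filter_linear_letter by (auto simp: g_def h_def position_nth k_def ts_def P_def)
  qed
  have la: "length (a u) = Suc k"
    unfolding a_def k_def ts_def by (simp add: length_blocks)
  have "sublist (concat (map \<theta> u)) (w_mr m (Suc k))"
    unfolding \<theta>_interleave g_ts[unfolded ts_def]
    by (rule interleave_zero_runs_sublist_w_mr[OF la]) (use assms(3) in \<open>auto simp: a_def P_def\<close>)
  then have "concat (map \<theta> v) = concat (map \<theta> u)"
    using assms(1,2) satisfies_factor_monoid_subst_eq by (simp add: k_def ts_def P_def)
  then have "map (position ts) (filter P v) = map (position ts) ts \<and> a v = a u"
    unfolding \<theta>_interleave g_def
    by (intro interleave_zero_runs_inj[where h = h]) (auto simp: a_def length_blocks ts_def comp_def)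
  moreover have "inj_on (position ts) (set ts)"
    using nth_position by (rule inj_on_inverseI)
  then have "inj_on (position ts) (set (filter P v) \<union> set ts)"
    by (rule inj_on_subset) (use assms(2) in \<open>auto simp: ts_def\<close>)
  ultimately show ?thesis
    unfolding P_def ts_def a_def by (auto simp: inj_on_map_eq_map)
qed

lemma linear_letter_if_filter_eq:
  assumes "filter (linear_letter u) v = filter (linear_letter u) u" "linear_letter u y"
  shows "linear_letter v y"
proof -
  have "count (mset v) y = count (mset (filter (linear_letter u) v)) y" using assms(2) by simp
  also have "\<dots> = 1" using assms by (simp add: linear_letter_def)
  finally show ?thesis by (simp add: linear_letter_def)
qed

lemma sort_filter_blocks_eq:
  assumes "length (blocks P u) = length (blocks P v)"
    and "\<And>y. Q y \<Longrightarrow>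
      map (\<lambda>b. count (mset b) y) (blocks P u) = map (\<lambda>b. count (mset b) y) (blocks P v)"
  shows "map (\<lambda>b. sort (filter Q b)) (blocks P u) = map (\<lambda>b. sort (filter Q b)) (blocks P v)"
proof (rule nth_equalityI)
  fix i assume "i < length (map (\<lambda>b. sort (filter Q b)) (blocks P u))"
  then have "count (mset (blocks P u ! i)) y = count (mset (blocks P v ! i)) y" if "Q y" for y
    using assms(1) arg_cong[OF assms(2)[OF that], of "\<lambda>cs. cs ! i"] by simp
  then have "mset (filter Q (blocks P u ! i)) = mset (filter Q (blocks P v ! i))"
    by (intro multiset_eqI) simp
  then show "map (\<lambda>b. sort (filter Q b)) (blocks P u) ! i = map (\<lambda>b. sort (filter Q b)) (blocks P v) ! i"
    using \<open>i < _\<close> assms(1) by (simp flip: sorted_list_of_multiset_mset)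
qed (use assms(1) in simp)

lemma count_blocks_eq_0: "Q y \<or> y \<notin> set w \<Longrightarrow> b \<in> set (blocks Q w) \<Longrightarrow> count (mset b) y = 0"
  using blocks_letters[of b Q w y] by (auto simp: count_eq_zero_iff)

lemma map_eq_imp_ball_eq:
  assumes "map f A = map f B"
  shows "(\<forall>a\<in>set A. P (f a)) \<longleftrightarrow> (\<forall>b\<in>set B. P (f b))"
proof -
  have "f ` set A = f ` set B" using assms by (metis list.set_map)
  then show ?thesis by (smt (verit) image_iff)
qed

lemma satisfies_sym: "satisfies G (u, v) \<Longrightarrow> satisfies G (v, u)"
  unfolding satisfies_def by auto

lemma w_mr_identities_preserve_blocks:
  assumes "\<forall>r\<ge>1. satisfies (factor_monoid (w_mr m r)) (u, v)"
    and "\<forall>b\<in>set (blocks (linear_letter u) u). count (mset b) x < m"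
  shows "filter (linear_letter u) v = filter (linear_letter u) u \<and>
    map (\<lambda>b. count (mset b) x) (blocks (linear_letter u) v) =
    map (\<lambda>b. count (mset b) x) (blocks (linear_letter u) u)"
proof (rule w_mr_identity_preserves_blocks)
  have "satisfies (factor_monoid (w_mr m 1)) (u, v)"
    using assms(1) by simp
  then show "set u = set v"
    using satisfies_factor_monoid_set_subset satisfies_sym by (metis subset_antisym)
qed (use assms in auto)

lemma w_mr_identities_filter_linear_letter:
  assumes "m > 0" "\<forall>r\<ge>1. satisfies (factor_monoid (w_mr m r)) (u, v)"
  shows "filter (linear_letter u) v = filter (linear_letter u) u"
proof -
  obtain x :: nat where "x \<notin> set u"
    using ex_new_if_finite[OF infinite_UNIV_nat] by blast
  then have "count (mset b) x = 0" if "b \<in> set (blocks (linear_letter u) u)" for b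
    using that \<open>x \<notin> set u\<close> count_blocks_eq_0[of "linear_letter u" x u] by simp
  then have "\<forall>b\<in>set (blocks (linear_letter u) u). count (mset b) x < m"
    using assms(1) by (simp del: count_mset_0_iff)
  then show ?thesis
    using w_mr_identities_preserve_blocks[OF assms(2)] by blast
qed

lemma w_mr_identities_linear_letter_eq:
  assumes "m > 0" "\<forall>r\<ge>1. satisfies (factor_monoid (w_mr m r)) (u, v)"
  shows "linear_letter u = linear_letter v"
proof -
  have "\<forall>r\<ge>1. satisfies (factor_monoid (w_mr m r)) (v, u)"
    using assms(2) satisfies_sym by blast
  then show ?thesis
    using w_mr_identities_filter_linear_letter[OF assms] w_mr_identities_filter_linear_letter[OF assms(1)]
      linear_letter_if_filter_eq by (intro ext iffI) metis+
qed

lemma normal_form_eq: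
  assumes "m > 0" and uv: "\<forall>r\<ge>1. satisfies (factor_monoid (w_mr m r)) (u, v)"
  shows "normal_form m u = normal_form m v"
proof -
  let ?P = "linear_letter u"
  let ?bounded = "\<lambda>w y. \<forall>b\<in>set (blocks ?P w). count (mset b) y < m"
  let ?counts = "\<lambda>w y. map (\<lambda>b. count (mset b) y) (blocks ?P w)"
  have vu: "\<forall>r\<ge>1. satisfies (factor_monoid (w_mr m r)) (v, u)"
    using uv satisfies_sym by blast
  have lin_eq: "?P = linear_letter v" and filter_eq: "filter ?P v = filter ?P u"
    using w_mr_identities_linear_letter_eq[OF assms] w_mr_identities_filter_linear_letter[OF assms] .
  have "satisfies (factor_monoid (w_mr m 1)) (u, v)" "satisfies (factor_monoid (w_mr m 1)) (v, u)"
    using uv vu by simp_all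
  then have set_eq: "set u = set v"
    using satisfies_factor_monoid_set_subset by (metis subset_antisym)
  have counts: "?counts u y = ?counts v y" if "?bounded u y \<or> ?bounded v y" for y
    using that w_mr_identities_preserve_blocks[OF uv] w_mr_identities_preserve_blocks[OF vu]
    unfolding lin_eq by auto
  then have "?bounded u y \<longleftrightarrow> ?bounded v y" for y
    using map_eq_imp_ball_eq[of "\<lambda>b. count (mset b) y" "blocks ?P u" "blocks ?P v" "\<lambda>c. c < m"]
    by blast
  then have "(\<exists>b\<in>set (blocks ?P u). m \<le> count (mset b) y) \<longleftrightarrow>
      (\<exists>b\<in>set (blocks ?P v). m \<le> count (mset b) y)" for y
    by (meson not_less)
  then have sat_eq: "saturated m u = saturated m v"
    unfolding saturated_def set_eq lin_eq by simp
  have length_eq: "length (blocks ?P u) = length (blocks ?P v)"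
    using filter_eq by (simp add: length_blocks)
  have "?counts u y = ?counts v y" if "y \<notin> saturated m u" for y
  proof (cases "?bounded u y")
    case False
    then have "?P y"
      using that assms(1) count_blocks_eq_0[of ?P y u]
      by (force simp: saturated_def not_less simp del: count_mset_0_iff)
    then show ?thesis
      using length_eq count_blocks_eq_0[of ?P y u] count_blocks_eq_0[of ?P y v]
      by (intro nth_equalityI) (auto simp del: count_mset_0_iff)
  qed (use counts in blast)
  then have "map (\<lambda>b. sort (filter (\<lambda>y. y \<notin> saturated m u) b)) (blocks ?P u) =
      map (\<lambda>b. sort (filter (\<lambda>y. y \<notin> saturated m u) b)) (blocks ?P v)"
    using length_eq by (intro sort_filter_blocks_eq) auto
  then show ?thesis
    unfolding normal_form_def sat_eq[symmetric] lin_eq[symmetric] filter_eq by simp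
qed

lemma in_E_satisfies_w_mr_identity:
  fixes G :: "('a, 'b) monoid_scheme"
  assumes "m > 0" "in_E m G" "\<forall>r\<ge>1. satisfies (factor_monoid (w_mr m r)) (u, v)"
  shows "satisfies G (u, v)"
  unfolding satisfies_def
proof (intro allI impI)
  fix \<phi> :: "nat \<Rightarrow> 'a"
  assume "\<forall>n. \<phi> n \<in> carrier G"
  then interpret E_eval G m \<phi>
    using assms(2) unfolding in_E_def by (auto intro!: E_eval.intro E_eval_axioms.intro)
  show "word_eval G \<phi> (fst (u, v)) = word_eval G \<phi> (snd (u, v))"
    using ev_normal_form[of u] ev_normal_form[of v] normal_form_eq[OF assms(1,3)] by simp
qed

theorem lemma5p2:
  fixes G :: "('a, 'b) monoid_scheme" and m :: nat
  assumes "m \<ge> 2"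
  shows "in_E m G \<longleftrightarrow> in_join_M m G"
proof
  assume "in_E m G"
  then show "in_join_M m G"
    using assms in_E_satisfies_w_mr_identity[of m G] unfolding in_join_M_def
    by (auto simp: in_E_def)
next
  assume "in_join_M m G"
  then show "in_E m G"
    unfolding in_join_M_def in_E_def using factor_monoid_w_mr_satisfies_E[OF assms] by blast
qed

end
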